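(* Let $X$ be a nonempty set and $d$ a reflexive triangular symmetric on $X$ such that $(X,d)$ is 0-complete. Let $T:X\to X$, $G\in\{M_1,M_2,M_3\}$, and suppose $d(Tx,Ty)\le\varphi(G(x,y))$ for all $x,y\in X$, for some nearly right admissible asymptotic normal function $\varphi:[0,\infty)\to[0,\infty)$. Then $T$ is a global Picard operator (modulo $d$).
   Context: A symmetric on $X$ is a map $d:X\times X\to[0,\infty)$ with $d(x,y)=d(y,x)$; it is reflexive triangular if $d(x,z)+d(y,y)\le d(x,y)+d(y,z)$ for all $x,y,z$. A sequence $(x_n)$ $0d$-converges to $x$ if $d(x_n,x)\to0$; it is $0d$-convergent if such $x$ exists; it is $0d$-Cauchy if for every $\varepsilon>0$ there is $j$ with $d(x_m,x_n)<\varepsilon$ whenever $j\le m<n$. $(X,d)$ is 0-complete if every $0d$-Cauchy sequence is $0d$-convergent. A nonempty $Y\subseteq X$ is $d$-singleton if $d(y_1,y_2)=0$ for all $y_1,y_2\in Y$. $\mathrm{Fix}(T;d)=\{z: d(z,Tz)=0\}$. $T$ is a global Picard operator (modulo $d$) if for every $x\in X$ the sequence $(T^nx)$ is $0d$-convergent and every point to which it $0d$-converges lies in $\mathrm{Fix}(T;d)$, and moreover $\mathrm{Fix}(T;d)$ is $d$-singleton. Notation: $M_1(x,y)=d(x,y)$, $H(x,y)=\max\{d(x,Tx),d(y,Ty)\}$, $L(x,y)=\frac12[d(x,Ty)+d(Tx,y)]$, $M_2=\max\{M_1,H\}$, $M_3=\max\{M_1,H,L\}$. $\varphi$ is normal if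 $\varphi(0)=0$ and $\varphi(t)<t$ for $t>0$; asymptotic normal if normal and every sequence $(r_n)$ in $[0,\infty)$ with $r_{n+1}\le\varphi(r_n)$ for all $n$ tends to $0$; nearly right admissible if normal and there is a countable $Q\subseteq(0,\infty)$ with $\max\{\limsup_{t\to s+}\varphi(t),\varphi(s)\}<s$ for all $s\in(0,\infty)\setminus Q$. *)

theory Defs
  imports "HOL-Analysis.Analysis"
begin

definition symmetric_on :: "'a set \<Rightarrow> ('a \<Rightarrow> 'a \<Rightarrow> real) \<Rightarrow> bool" where
  "symmetric_on X d \<longleftrightarrow> (\<forall>x\<in>X. \<forall>y\<in>X. d x y \<ge> 0 \<and> d x y = d y x)"

definition refl_triangular :: "'a set \<Rightarrow> ('a \<Rightarrow> 'a \<Rightarrow> real) \<Rightarrow> bool" where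
  "refl_triangular X d \<longleftrightarrow>
     (\<forall>x\<in>X. \<forall>y\<in>X. \<forall>z\<in>X. d x z + d y y \<le> d x y + d y z)"

definition zero_converges :: "('a \<Rightarrow> 'a \<Rightarrow> real) \<Rightarrow> (nat \<Rightarrow> 'a) \<Rightarrow> 'a \<Rightarrow> bool" where
  "zero_converges d s x \<longleftrightarrow> ((\<lambda>n. d (s n) x) \<longlonglongrightarrow> 0)"

definition zero_convergent :: "'a set \<Rightarrow> ('a \<Rightarrow> 'a \<Rightarrow> real) \<Rightarrow> (nat \<Rightarrow> 'a) \<Rightarrow> bool" where
  "zero_convergent X d s \<longleftrightarrow> (\<exists>x\<in>X. zero_converges d s x)"

definition zero_Cauchy :: "('a \<Rightarrow> 'a \<Rightarrow> real) \<Rightarrow> (nat \<Rightarrow> 'a) \<Rightarrow> bool" where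
  "zero_Cauchy d s \<longleftrightarrow> (\<forall>e>0. \<exists>j. \<forall>m n. j \<le> m \<and> m < n \<longrightarrow> d (s m) (s n) < e)"

definition zero_complete :: "'a set \<Rightarrow> ('a \<Rightarrow> 'a \<Rightarrow> real) \<Rightarrow> bool" where
  "zero_complete X d \<longleftrightarrow>
     (\<forall>s. (\<forall>n. s n \<in> X) \<longrightarrow> zero_Cauchy d s \<longrightarrow> zero_convergent X d s)"

definition d_singleton :: "'a set \<Rightarrow> ('a \<Rightarrow> 'a \<Rightarrow> real) \<Rightarrow> bool" where
  "d_singleton Y d \<longleftrightarrow> Y \<noteq> {} \<and> (\<forall>y1\<in>Y. \<forall>y2\<in>Y. d y1 y2 = 0)"

definition Fix_d :: "'a set \<Rightarrow> ('a \<Rightarrow> 'a) \<Rightarrow> ('a \<Rightarrow> 'a \<Rightarrow> real) \<Rightarrow> 'a set" where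
  "Fix_d X T d = {z\<in>X. d z (T z) = 0}"

definition global_Picard :: "'a set \<Rightarrow> ('a \<Rightarrow> 'a \<Rightarrow> real) \<Rightarrow> ('a \<Rightarrow> 'a) \<Rightarrow> bool" where
  "global_Picard X d T \<longleftrightarrow>
     (\<forall>x\<in>X. zero_convergent X d (\<lambda>n. (T ^^ n) x) \<and>
        (\<forall>z\<in>X. zero_converges d (\<lambda>n. (T ^^ n) x) z \<longrightarrow> z \<in> Fix_d X T d))
     \<and> d_singleton (Fix_d X T d) d"

definition M1 :: "('a \<Rightarrow> 'a \<Rightarrow> real) \<Rightarrow> ('a \<Rightarrow> 'a) \<Rightarrow> 'a \<Rightarrow> 'a \<Rightarrow> real" where
  "M1 d T x y = d x y"

definition Hfun :: "('a \<Rightarrow> 'a \<Rightarrow> real) \<Rightarrow> ('a \<Rightarrow> 'a) \<Rightarrow> 'a \<Rightarrow> 'a \<Rightarrow> real" where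
  "Hfun d T x y = max (d x (T x)) (d y (T y))"

definition Lfun :: "('a \<Rightarrow> 'a \<Rightarrow> real) \<Rightarrow> ('a \<Rightarrow> 'a) \<Rightarrow> 'a \<Rightarrow> 'a \<Rightarrow> real" where
  "Lfun d T x y = (d x (T y) + d (T x) y) / 2"

definition M2 :: "('a \<Rightarrow> 'a \<Rightarrow> real) \<Rightarrow> ('a \<Rightarrow> 'a) \<Rightarrow> 'a \<Rightarrow> 'a \<Rightarrow> real" where
  "M2 d T x y = max (M1 d T x y) (Hfun d T x y)"

definition M3 :: "('a \<Rightarrow> 'a \<Rightarrow> real) \<Rightarrow> ('a \<Rightarrow> 'a) \<Rightarrow> 'a \<Rightarrow> 'a \<Rightarrow> real" where
  "M3 d T x y = max (max (M1 d T x y) (Hfun d T x y)) (Lfun d T x y)"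

text \<open>Functions \<open>\<phi> : [0,\<infinity>) \<rightarrow> [0,\<infinity>)\<close> are represented as real functions that are
  nonnegative on \<open>[0,\<infinity>)\<close>; only their values on \<open>[0,\<infinity>)\<close> matter.\<close>
definition normal_fun :: "(real \<Rightarrow> real) \<Rightarrow> bool" where
  "normal_fun \<phi> \<longleftrightarrow> \<phi> 0 = 0 \<and> (\<forall>t>0. \<phi> t < t)"

definition asymptotic_normal :: "(real \<Rightarrow> real) \<Rightarrow> bool" where
  "asymptotic_normal \<phi> \<longleftrightarrow> normal_fun \<phi> \<and>
     (\<forall>r::nat \<Rightarrow> real. (\<forall>n. r n \<ge> 0) \<longrightarrow> (\<forall>n. r (Suc n) \<le> \<phi> (r n)) \<longrightarrow> r \<longlonglongrightarrow> 0)"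

definition nearly_right_admissible :: "(real \<Rightarrow> real) \<Rightarrow> bool" where
  "nearly_right_admissible \<phi> \<longleftrightarrow> normal_fun \<phi> \<and>
     (\<exists>Q::real set. countable Q \<and> Q \<subseteq> {0<..} \<and>
        (\<forall>s>0. s \<notin> Q \<longrightarrow>
           max (Limsup (at_right s) (\<lambda>t. ereal (\<phi> t))) (ereal (\<phi> s)) < ereal s))"

end

theory Submission
  imports Defs
begin

text \<open>Along an orbit the consecutive distances \<open>r\<^sub>n = d(T\<^sup>nx, T\<^sup>n\<^sup>+\<^sup>1x)\<close> satisfy
  \<open>r\<^sub>n\<^sub>+\<^sub>1 \<le> \<phi>(r\<^sub>n)\<close>, so they tend to 0 because \<phi> is asymptotic. If the orbit were not
  Cauchy, some distance \<open>d(T\<^sup>mx, T\<^sup>kx)\<close> would have to cross a level \<open>\<epsilon>\<close> chosen outside the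
  exceptional set of \<phi>, where \<open>\<phi> < c < \<epsilon>\<close> on a right neighbourhood of \<open>\<epsilon>\<close>; applying the
  contraction to the crossing pair pushes that distance below \<open>c + o(1) < \<epsilon>\<close>. Limits of orbits are
  fixed points because \<open>G(T\<^sup>nx, z)\<close> is eventually \<open>d(T\<^sup>nx, z)\<close> or \<open>d(z, Tz)\<close>, and two fixed
  points \<open>u, v\<close> satisfy \<open>d(u,v) \<le> \<phi>(d(u,v))\<close>.\<close>

lemma normal_fun_le:
  assumes "normal_fun \<phi>" "0 \<le> t"
  shows "\<phi> t \<le> t"
  using assms by (cases "t = 0") (auto simp: normal_fun_def less_imp_le)

lemma normal_fun_less:
  assumes "normal_fun \<phi>" "0 < t"
  shows "\<phi> t < t"
  using assms by (auto simp: normal_fun_def)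

lemma nearly_right_admissible_gap:
  assumes "nearly_right_admissible \<phi>" "0 < e"
  obtains c \<epsilon> b where "0 < c" "c < \<epsilon>" "\<epsilon> < e" "\<epsilon> < b"
    and "\<And>t. \<epsilon> \<le> t \<Longrightarrow> t < b \<Longrightarrow> \<phi> t < c"
proof -
  obtain Q where "countable Q" and Q: "\<And>s. 0 < s \<Longrightarrow> s \<notin> Q \<Longrightarrow>
      max (Limsup (at_right s) (\<lambda>t. ereal (\<phi> t))) (ereal (\<phi> s)) < ereal s"
    using assms(1) unfolding nearly_right_admissible_def by blast
  have "\<not> {0<..<e} \<subseteq> Q"
    using \<open>countable Q\<close> countable_subset uncountable_open_interval[of 0 e] \<open>0 < e\<close> by auto
  then obtain \<epsilon> where \<epsilon>: "0 < \<epsilon>" "\<epsilon> < e" "\<epsilon> \<notin> Q"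
    by (meson greaterThanLessThan_iff subsetI)
  have "max (max (Limsup (at_right \<epsilon>) (\<lambda>t. ereal (\<phi> t))) (ereal (\<phi> \<epsilon>))) 0 < ereal \<epsilon>"
    using Q \<epsilon> by simp
  then obtain c where c: "max (max (Limsup (at_right \<epsilon>) (\<lambda>t. ereal (\<phi> t))) (ereal (\<phi> \<epsilon>))) 0
      < ereal c" "c < \<epsilon>"
    using ereal_dense2 by fastforce
  then have "eventually (\<lambda>t. ereal (\<phi> t) < ereal c) (at_right \<epsilon>)"
    by (intro Limsup_lessD) simp
  then obtain b where "\<epsilon> < b" and b: "\<And>t. \<epsilon> < t \<Longrightarrow> t < b \<Longrightarrow> \<phi> t < c"
    unfolding eventually_at_right_field by auto
  have below_c: "\<phi> t < c" if "\<epsilon> \<le> t" "t < b" for t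
    using that b[of t] c(1) by (cases "t = \<epsilon>") auto
  have "0 < c"
    using c(1) by simp
  from that[OF this c(2) \<epsilon>(2) \<open>\<epsilon> < b\<close> below_c] show thesis .
qed

lemma nat_first_crossing:
  assumes "\<not> P k" "P n" "k \<le> n"
  shows "\<exists>p. k \<le> p \<and> p < n \<and> \<not> P p \<and> P (Suc p)"
  using assms
proof (induction n)
  case 0
  then show ?case by simp
next
  case (Suc n)
  have "k \<noteq> Suc n"
    using Suc.prems by auto
  then have "k \<le> n"
    using Suc.prems(3) by simp
  show ?case
  proof (cases "P n")
    case True
    then obtain p where "k \<le> p" "p < n" "\<not> P p" "P (Suc p)"
      using Suc.IH[OF Suc.prems(1) _ \<open>k \<le> n\<close>] by blast
    then show ?thesis
      by (intro exI[of _ p]) simp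
  next
    case False
    then show ?thesis
      using Suc.prems(2) \<open>k \<le> n\<close> by (intro exI[of _ n]) simp
  qed
qed

lemma dist_le_G:
  assumes "G \<in> {M1 d T, M2 d T, M3 d T}"
  shows "d x y \<le> G x y"
  using assms by (auto simp: M1_def M2_def M3_def)

lemma G_le_M3:
  assumes "G \<in> {M1 d T, M2 d T, M3 d T}"
  shows "G x y \<le> M3 d T x y"
  using assms by (auto simp: M1_def M2_def M3_def)

locale rt_symmetric =
  fixes X :: "'a set" and d :: "'a \<Rightarrow> 'a \<Rightarrow> real"
  assumes symmetric: "symmetric_on X d"
    and refl_triangular: "refl_triangular X d"
begin

lemma nonneg: "x \<in> X \<Longrightarrow> y \<in> X \<Longrightarrow> 0 \<le> d x y"
  using symmetric by (auto simp: symmetric_on_def)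

lemma commute: "x \<in> X \<Longrightarrow> y \<in> X \<Longrightarrow> d x y = d y x"
  using symmetric by (auto simp: symmetric_on_def)

lemma refl_triangle: "x \<in> X \<Longrightarrow> y \<in> X \<Longrightarrow> z \<in> X \<Longrightarrow> d x z + d y y \<le> d x y + d y z"
  using refl_triangular by (auto simp: refl_triangular_def)

lemma triangle: "x \<in> X \<Longrightarrow> y \<in> X \<Longrightarrow> z \<in> X \<Longrightarrow> d x z \<le> d x y + d y z"
  using refl_triangle[of x y z] nonneg[of y y] by linarith

end

locale rt_contraction = rt_symmetric X d
  for X :: "'a set" and d :: "'a \<Rightarrow> 'a \<Rightarrow> real" +
  fixes T :: "'a \<Rightarrow> 'a" and \<phi> :: "real \<Rightarrow> real" and G :: "'a \<Rightarrow> 'a \<Rightarrow> real"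
  assumes maps_into: "\<forall>x\<in>X. T x \<in> X"
    and G_choice: "G \<in> {M1 d T, M2 d T, M3 d T}"
    and normal: "normal_fun \<phi>"
    and contraction: "\<forall>x\<in>X. \<forall>y\<in>X. d (T x) (T y) \<le> \<phi> (G x y)"
begin

lemma image_in: "x \<in> X \<Longrightarrow> T x \<in> X"
  using maps_into by blast

lemma iterate_in: "x \<in> X \<Longrightarrow> (T ^^ n) x \<in> X"
  by (induction n) (auto simp: image_in)

lemma contract: "x \<in> X \<Longrightarrow> y \<in> X \<Longrightarrow> d (T x) (T y) \<le> \<phi> (G x y)"
  using contraction by blast

lemma G_le_add_Hfun:
  assumes "x \<in> X" "y \<in> X"
  shows "G x y \<le> d x y + Hfun d T x y"
proof -
  have "d x (T y) \<le> d x y + d y (T y)"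
    using assms by (intro triangle image_in)
  moreover have "d (T x) y \<le> d x (T x) + d x y"
    using assms triangle[of "T x" x y] commute[of x "T x"] image_in by simp
  ultimately have "Lfun d T x y \<le> d x y + Hfun d T x y"
    by (auto simp: Lfun_def Hfun_def)
  moreover have "0 \<le> d x y" "0 \<le> Hfun d T x y"
    using assms nonneg image_in by (auto simp: Hfun_def le_max_iff_disj)
  ultimately show ?thesis
    using G_le_M3[OF G_choice, of x y] unfolding M3_def M1_def by linarith
qed

lemma dist_le_via_images:
  assumes "x \<in> X" "y \<in> X"
  shows "d x y \<le> d x (T x) + \<phi> (G x y) + d y (T y)"
proof -
  have "d x y \<le> d x (T x) + d (T x) y"
    "d (T x) y \<le> d (T x) (T y) + d (T y) y"
    using assms by (auto intro!: triangle image_in)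
  then show ?thesis
    using contract[OF assms] commute[OF assms(2) image_in[OF assms(2)]] by linarith
qed

lemma dist_image_iterate:
  assumes "x \<in> X"
  shows "d (T x) (T (T x)) \<le> \<phi> (d x (T x))"
proof -
  define r0 r1 where "r0 = d x (T x)" and "r1 = d (T x) (T (T x))"
  have Tx: "T x \<in> X" "T (T x) \<in> X"
    using assms image_in by auto
  have "0 \<le> r0" "0 \<le> r1"
    unfolding r0_def r1_def using assms Tx nonneg by auto
  have r1: "r1 \<le> \<phi> (G x (T x))"
    unfolding r1_def using contract assms Tx by blast
  have lower: "r0 \<le> G x (T x)"
    unfolding r0_def using G_choice by (rule dist_le_G)
  \<comment> \<open>here \<open>L(x,Tx) \<le> (r\<^sub>0 + r\<^sub>1)/2\<close> uses the term \<open>d(Tx,Tx)\<close> of the reflexive triangle inequality\<close>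
  have "Lfun d T x (T x) \<le> max r0 r1"
    using refl_triangle[OF assms Tx] unfolding Lfun_def r0_def r1_def by auto
  then have upper: "G x (T x) \<le> max r0 r1"
    using G_le_M3[OF G_choice, of x "T x"] unfolding M3_def M1_def Hfun_def r0_def r1_def by auto
  have "r1 \<le> r0"
  proof (rule ccontr)
    assume "\<not> r1 \<le> r0"
    then have "G x (T x) \<le> r1"
      using upper by simp
    have "G x (T x) \<noteq> 0"
      using r1 normal \<open>\<not> r1 \<le> r0\<close> \<open>0 \<le> r0\<close> unfolding normal_fun_def by auto
    then have "0 < G x (T x)"
      using lower \<open>0 \<le> r0\<close> by linarith
    then show False
      using normal_fun_less[OF normal] r1 \<open>G x (T x) \<le> r1\<close> by fastforce
  qed
  then show ?thesis
    using lower upper r1 unfolding r0_def r1_def by simp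
qed

lemma orbit_step_dist_tendsto_0:
  assumes "asymptotic_normal \<phi>" "x \<in> X"
  shows "(\<lambda>n. d ((T ^^ n) x) ((T ^^ Suc n) x)) \<longlonglongrightarrow> 0"
  using assms(1) unfolding asymptotic_normal_def
proof (elim conjE allE impE)
  show "\<forall>n. 0 \<le> d ((T ^^ n) x) ((T ^^ Suc n) x)"
    using iterate_in[OF assms(2)] nonneg by blast
  show "\<forall>n. d ((T ^^ Suc n) x) ((T ^^ Suc (Suc n)) x) \<le> \<phi> (d ((T ^^ n) x) ((T ^^ Suc n) x))"
    using dist_image_iterate[OF iterate_in[OF assms(2)]] by simp
qed

lemma dist_bound_in_gap:
  assumes "x \<in> X" "y \<in> X"
    and gap: "\<And>t. \<epsilon> \<le> t \<Longrightarrow> t < b \<Longrightarrow> \<phi> t < c"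
    and "\<epsilon> \<le> d x y" "d x y + Hfun d T x y < b"
  shows "d x y < c + 2 * Hfun d T x y"
proof -
  have "\<epsilon> \<le> G x y" "G x y < b"
    using assms dist_le_G[OF G_choice, of x y] G_le_add_Hfun[OF assms(1,2)] by linarith+
  then have "\<phi> (G x y) < c"
    by (rule gap)
  then show ?thesis
    using dist_le_via_images[OF assms(1,2)] unfolding Hfun_def by linarith
qed

lemma orbit_zero_Cauchy:
  assumes "asymptotic_normal \<phi>" "nearly_right_admissible \<phi>" "x0 \<in> X"
  shows "zero_Cauchy d (\<lambda>n. (T ^^ n) x0)"
proof (rule ccontr)
  define x where "x n = (T ^^ n) x0" for n
  define r where "r n = d (x n) (x (Suc n))" for n
  have xX: "x n \<in> X" for n
    unfolding x_def using assms(3) by (rule iterate_in)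
  have xS: "T (x n) = x (Suc n)" for n
    unfolding x_def by simp
  assume "\<not> zero_Cauchy d (\<lambda>n. (T ^^ n) x0)"
  then obtain e where "0 < e" and far: "\<And>j. \<exists>m n. j \<le> m \<and> m < n \<and> e \<le> d (x m) (x n)"
    unfolding zero_Cauchy_def x_def by (auto simp: not_less)
  obtain c \<epsilon> b where "0 < c" "c < \<epsilon>" "\<epsilon> < e" "\<epsilon> < b"
    and gap: "\<And>t. \<epsilon> \<le> t \<Longrightarrow> t < b \<Longrightarrow> \<phi> t < c"
    using nearly_right_admissible_gap[OF assms(2) \<open>0 < e\<close>] by metis
  define \<eta> where "\<eta> = min ((b - \<epsilon>) / 2) ((\<epsilon> - c) / 3)"
  have "0 < \<eta>" and \<eta>: "2 * \<eta> \<le> b - \<epsilon>" "3 * \<eta> \<le> \<epsilon> - c"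
    unfolding \<eta>_def using \<open>c < \<epsilon>\<close> \<open>\<epsilon> < b\<close> by (auto simp: min_def)
  have "r \<longlonglongrightarrow> 0"
    unfolding r_def x_def using orbit_step_dist_tendsto_0[OF assms(1,3)] .
  from order_tendstoD(2)[OF this \<open>0 < \<eta>\<close>]
  obtain N where small: "\<And>n. N \<le> n \<Longrightarrow> r n < \<eta>"
    unfolding eventually_sequentially by blast
  obtain m n where "N \<le> m" "m < n" "e \<le> d (x m) (x n)"
    using far by blast
  moreover have "\<not> \<epsilon> \<le> d (x m) (x (Suc m))"
    using small[OF \<open>N \<le> m\<close>] \<eta> \<open>0 < \<eta>\<close> \<open>0 < c\<close> unfolding r_def by linarith
  ultimately obtain p where "m < p" and below: "d (x m) (x p) < \<epsilon>"
    and above: "\<epsilon> \<le> d (x m) (x (Suc p))"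
    using nat_first_crossing[of "\<lambda>k. \<epsilon> \<le> d (x m) (x k)" "Suc m" n] \<open>\<epsilon> < e\<close>
    by (auto simp: Suc_le_eq not_le)
  have "r m < \<eta>" "r p < \<eta>" "r (Suc p) < \<eta>"
    using small \<open>N \<le> m\<close> \<open>m < p\<close> by auto
  then have H: "Hfun d T (x m) (x (Suc p)) < \<eta>"
    unfolding Hfun_def xS r_def by simp
  have "d (x m) (x (Suc p)) < \<epsilon> + \<eta>"
    using triangle[OF xX[of m] xX[of p] xX[of "Suc p"]] below \<open>r p < \<eta>\<close> unfolding r_def by linarith
  then have "d (x m) (x (Suc p)) < c + 2 * Hfun d T (x m) (x (Suc p))"
    using dist_bound_in_gap[OF xX xX, where b = b and c = c, OF gap above] H \<eta> by linarith
  then show False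
    using above H \<eta> \<open>0 < \<eta>\<close> by linarith
qed

lemma G_eq_dist_or_displacement:
  assumes "x \<in> X" "z \<in> X"
    and "d x (T x) \<le> d z (T z)" "d x z + d (T x) z \<le> d z (T z)"
  shows "G x z = d x z \<or> G x z = d z (T z)"
proof -
  have "d x (T z) \<le> d x z + d z (T z)"
    using assms by (intro triangle image_in)
  then have "Lfun d T x z \<le> d z (T z)"
    using assms(4) unfolding Lfun_def by simp
  moreover have "Hfun d T x z = d z (T z)" "d x z \<le> d z (T z)"
    using assms nonneg image_in unfolding Hfun_def by (auto intro: order_trans[rotated])
  ultimately show ?thesis
    using G_choice by (auto simp: M1_def M2_def M3_def)
qed

lemma orbit_limit_fixed:
  assumes "asymptotic_normal \<phi>" "\<forall>t\<ge>0. 0 \<le> \<phi> t"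
    and "x0 \<in> X" "z \<in> X" "zero_converges d (\<lambda>n. (T ^^ n) x0) z"
  shows "d z (T z) = 0"
proof (rule ccontr)
  define x where "x n = (T ^^ n) x0" for n
  define a where "a = d z (T z)"
  have xX: "x n \<in> X" for n
    unfolding x_def using assms(3) by (rule iterate_in)
  have xS: "T (x n) = x (Suc n)" for n
    unfolding x_def by simp
  assume "d z (T z) \<noteq> 0"
  then have "0 < a"
    using nonneg[OF assms(4) image_in[OF assms(4)]] unfolding a_def by simp
  then have \<phi>a: "\<phi> a < a" "0 \<le> \<phi> a"
    using normal_fun_less[OF normal] assms(2) by auto
  define \<eta> where "\<eta> = (a - \<phi> a) / 2"
  have "0 < \<eta>"
    unfolding \<eta>_def using \<phi>a by simp
  have "\<forall>\<^sub>F n in sequentially. d (x n) z < \<eta>"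
    using order_tendstoD(2)[OF assms(5)[unfolded zero_converges_def] \<open>0 < \<eta>\<close>]
    unfolding x_def .
  moreover have "\<forall>\<^sub>F n in sequentially. d (x n) (x (Suc n)) < a"
    using order_tendstoD(2)[OF orbit_step_dist_tendsto_0[OF assms(1,3)] \<open>0 < a\<close>]
    unfolding x_def .
  ultimately obtain n where "d (x n) z < \<eta>" "d (x (Suc n)) z < \<eta>" "d (x n) (x (Suc n)) < a"
    unfolding eventually_sequentially by (metis le_Suc_eq nle_le)
  then have G: "G (x n) z = d (x n) z \<or> G (x n) z = a"
    using G_eq_dist_or_displacement[OF xX assms(4)] \<phi>a unfolding a_def \<eta>_def xS by simp
  have "\<phi> (d (x n) z) < \<eta>"
    using normal_fun_le[OF normal nonneg[OF xX[of n] assms(4)]] \<open>d (x n) z < \<eta>\<close> by linarith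
  then have "\<phi> (G (x n) z) \<le> max \<eta> (\<phi> a)"
    using G by auto
  moreover have "a \<le> d z (x (Suc n)) + d (x (Suc n)) (T z)"
    unfolding a_def using assms(4) xX image_in by (intro triangle)
  moreover have "d (x (Suc n)) (T z) \<le> \<phi> (G (x n) z)"
    unfolding xS[symmetric] using contract xX assms(4) by blast
  ultimately have "a < \<eta> + max \<eta> (\<phi> a)"
    using \<open>d (x (Suc n)) z < \<eta>\<close> commute[OF assms(4) xX[of "Suc n"]] by linarith
  moreover have "\<eta> \<le> a - \<eta>" "\<phi> a \<le> a - \<eta>"
    using \<phi>a unfolding \<eta>_def by (simp_all add: field_simps)
  ultimately show False
    by (simp add: max_def split: if_splits)
qed

lemma Fix_d_dist_eq_0:
  assumes "u \<in> Fix_d X T d" "v \<in> Fix_d X T d"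
  shows "d u v = 0"
proof -
  have u: "u \<in> X" "d u (T u) = 0" and v: "v \<in> X" "d v (T v) = 0"
    using assms unfolding Fix_d_def by auto
  then have "G u v \<le> d u v"
    using G_le_add_Hfun[OF u(1) v(1)] unfolding Hfun_def by simp
  then have "G u v = d u v"
    using dist_le_G[OF G_choice, of u v] by linarith
  then have "d u v \<le> \<phi> (d u v)"
    using dist_le_via_images[OF u(1) v(1)] u v by simp
  moreover have "\<phi> (d u v) < d u v" if "d u v \<noteq> 0"
    using that nonneg[OF u(1) v(1)] normal_fun_less[OF normal] by simp
  ultimately show ?thesis
    by linarith
qed

lemma global_Picard_if_orbits_converge:
  assumes "X \<noteq> {}"
    and conv: "\<And>x. x \<in> X \<Longrightarrow> zero_convergent X d (\<lambda>n. (T ^^ n) x)"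
    and fixed: "\<And>x z. x \<in> X \<Longrightarrow> z \<in> X \<Longrightarrow> zero_converges d (\<lambda>n. (T ^^ n) x) z \<Longrightarrow>
      z \<in> Fix_d X T d"
  shows "global_Picard X d T"
proof -
  obtain x where "x \<in> X"
    using assms(1) by blast
  then obtain z where "z \<in> X" "zero_converges d (\<lambda>n. (T ^^ n) x) z"
    using conv unfolding zero_convergent_def by blast
  then have "Fix_d X T d \<noteq> {}"
    using fixed \<open>x \<in> X\<close> by blast
  then show ?thesis
    unfolding global_Picard_def d_singleton_def
    using conv fixed Fix_d_dist_eq_0 by blast
qed

end

theorem theorem2:
  fixes X :: "'a set" and d :: "'a \<Rightarrow> 'a \<Rightarrow> real" and T :: "'a \<Rightarrow> 'a"
    and \<phi> :: "real \<Rightarrow> real" and G :: "'a \<Rightarrow> 'a \<Rightarrow> real"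
  assumes "X \<noteq> {}"
    and "symmetric_on X d"
    and "refl_triangular X d"
    and "zero_complete X d"
    and "\<forall>x\<in>X. T x \<in> X"
    and "G \<in> {M1 d T, M2 d T, M3 d T}"
    and "\<forall>t\<ge>0. \<phi> t \<ge> 0"
    and "nearly_right_admissible \<phi>"
    and "asymptotic_normal \<phi>"
    and "\<forall>x\<in>X. \<forall>y\<in>X. d (T x) (T y) \<le> \<phi> (G x y)"
  shows "global_Picard X d T"
proof -
  have "normal_fun \<phi>"
    using assms(9) unfolding asymptotic_normal_def by blast
  with assms(2,3,5,6,10) interpret rt_contraction X d T \<phi> G
    by unfold_locales
  show ?thesis
  proof (rule global_Picard_if_orbits_converge[OF assms(1)])
    fix x assume "x \<in> X"
    then show "zero_convergent X d (\<lambda>n. (T ^^ n) x)"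
      using assms(4)[unfolded zero_complete_def, rule_format, OF iterate_in]
        orbit_zero_Cauchy[OF assms(9,8)] by simp
  next
    fix x z assume "x \<in> X" "z \<in> X" "zero_converges d (\<lambda>n. (T ^^ n) x) z"
    then show "z \<in> Fix_d X T d"
      using orbit_limit_fixed[OF assms(9,7)] unfolding Fix_d_def by simp
  qed
qed

end
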